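(* Let $F$ be a field of characteristic different from $2$, $Q_1,\dots,Q_4$ quaternion $F$-algebras with canonical involutions $\gamma_i$, $(D,\gamma)=(Q_1,\gamma_1)\otimes(Q_2,\gamma_2)$, and $u\in D$ invertible with $\gamma(u)=u$ and $\mathrm{Trd}_D(u)=0$, together with an isomorphism $\phi:(Q_3,\gamma_3)\otimes(Q_4,\gamma_4)\xrightarrow{\sim}(D,\mathrm{Int}(u^{-1})\circ\gamma)$. For a pure quaternion $q\in Q_4^0$, let $W_q=\phi(\{x\otimes q: x\in Q_3^0\})$. Then $\gamma(W_q)$ is a totally isotropic subspace of $D$ for the quadratic form $q_u(x)=\mathrm{Trd}_D(xu\gamma(x))$.
   Context: The canonical involution of a quaternion algebra $Q$ is $\gamma_Q(x)=\mathrm{Trd}_Q(x)-x$; $Q^0=\{x\in Q:\mathrm{Trd}_Q(x)=0\}$ is the space of pure quaternions. $\mathrm{Int}(a)(x)=axa^{-1}$; $\mathrm{Trd}_D$ is the reduced trace of $D$. *)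

theory Defs
  imports Main
begin

text \<open>Quaternion algebra (a,b)_F over a field F (char F \<noteq> 2), a, b nonzero,
  with F-basis e_(p,q) = i^p j^q for p, q :: bool, i.e. 1, i, j, k = ij,
  where i^2 = a, j^2 = b, ij = -ji.\<close>

type_synonym 'a quat = "bool \<times> bool \<Rightarrow> 'a"

text \<open>Tensor product Q1 \<otimes> Q2 with F-basis e_\<alpha> \<otimes> f_\<beta>.\<close>
type_synonym 'a biquat = "(bool \<times> bool) \<times> (bool \<times> bool) \<Rightarrow> 'a"

definition bxor :: "bool \<times> bool \<Rightarrow> bool \<times> bool \<Rightarrow> bool \<times> bool" where
  "bxor \<alpha> \<beta> = (fst \<alpha> \<noteq> fst \<beta>, snd \<alpha> \<noteq> snd \<beta>)"

text \<open>Structure constants: e_(p,q) e_(p',q') = qsign a b (p,q) (p',q') e_(p xor p', q xor q').\<close>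
definition qsign :: "'a::field \<Rightarrow> 'a \<Rightarrow> bool \<times> bool \<Rightarrow> bool \<times> bool \<Rightarrow> 'a" where
  "qsign a b \<alpha> \<beta> =
     (if snd \<alpha> \<and> fst \<beta> then -1 else 1) *
     (if fst \<alpha> \<and> fst \<beta> then a else 1) *
     (if snd \<alpha> \<and> snd \<beta> then b else 1)"

definition qbasis :: "bool \<times> bool \<Rightarrow> 'a::field quat" where
  "qbasis \<alpha> = (\<lambda>\<gamma>. if \<gamma> = \<alpha> then 1 else 0)"

definition qmul :: "'a::field \<Rightarrow> 'a \<Rightarrow> 'a quat \<Rightarrow> 'a quat \<Rightarrow> 'a quat" where
  "qmul a b x y = (\<lambda>\<gamma>. \<Sum>\<alpha>\<in>UNIV. \<Sum>\<beta>\<in>UNIV.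
      if bxor \<alpha> \<beta> = \<gamma> then qsign a b \<alpha> \<beta> * x \<alpha> * y \<beta> else 0)"

definition qtrd :: "'a::field quat \<Rightarrow> 'a" where
  "qtrd x = 2 * x (False, False)"

definition qcanon :: "'a::field quat \<Rightarrow> 'a quat" where
  "qcanon x = (\<lambda>\<gamma>. qtrd x * qbasis (False, False) \<gamma> - x \<gamma>)"

text \<open>Multiplication in (a1,b1)_F \<otimes> (a2,b2)_F:
  (e_\<alpha> \<otimes> f_\<beta>)(e_\<alpha>' \<otimes> f_\<beta>') = (e_\<alpha> e_\<alpha>') \<otimes> (f_\<beta> f_\<beta>').\<close>
definition bmul :: "'a::field \<Rightarrow> 'a \<Rightarrow> 'a \<Rightarrow> 'a \<Rightarrow> 'a biquat \<Rightarrow> 'a biquat \<Rightarrow> 'a biquat" where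
  "bmul a1 b1 a2 b2 X Y = (\<lambda>(\<gamma>, \<delta>). \<Sum>(\<alpha>, \<beta>)\<in>UNIV. \<Sum>(\<alpha>', \<beta>')\<in>UNIV.
      if bxor \<alpha> \<alpha>' = \<gamma> \<and> bxor \<beta> \<beta>' = \<delta>
      then qsign a1 b1 \<alpha> \<alpha>' * qsign a2 b2 \<beta> \<beta>' * X (\<alpha>, \<beta>) * Y (\<alpha>', \<beta>') else 0)"

definition tensor :: "'a::field quat \<Rightarrow> 'a quat \<Rightarrow> 'a biquat" where
  "tensor x y = (\<lambda>(\<alpha>, \<beta>). x \<alpha> * y \<beta>)"

definition bone :: "'a::field biquat" where
  "bone = tensor (qbasis (False, False)) (qbasis (False, False))"

definition tensor_map :: "('a::field quat \<Rightarrow> 'a quat) \<Rightarrow> ('a quat \<Rightarrow> 'a quat) \<Rightarrow> 'a biquat \<Rightarrow> 'a biquat" where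
  "tensor_map f g X = (\<lambda>(\<gamma>, \<delta>). \<Sum>(\<alpha>, \<beta>)\<in>UNIV. f (qbasis \<alpha>) \<gamma> * g (qbasis \<beta>) \<delta> * X (\<alpha>, \<beta>))"

text \<open>Reduced trace of Q1 \<otimes> Q2: Trd_D(x \<otimes> y) = Trd_Q1(x) Trd_Q2(y), extended linearly.\<close>
definition btrd :: "'a::field biquat \<Rightarrow> 'a" where
  "btrd X = (\<Sum>(\<alpha>, \<beta>)\<in>UNIV. qtrd (qbasis \<alpha> :: 'a quat) * qtrd (qbasis \<beta> :: 'a quat) * X (\<alpha>, \<beta>))"

definition is_subspace :: "('b \<Rightarrow> 'a::field) set \<Rightarrow> bool" where
  "is_subspace S \<longleftrightarrow> (\<lambda>_. 0) \<in> S \<and>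
     (\<forall>x\<in>S. \<forall>y\<in>S. (\<lambda>z. x z + y z) \<in> S) \<and>
     (\<forall>c. \<forall>x\<in>S. (\<lambda>z. c * x z) \<in> S)"

definition totally_isotropic :: "(('b \<Rightarrow> 'a::field) \<Rightarrow> 'a) \<Rightarrow> ('b \<Rightarrow> 'a) set \<Rightarrow> bool" where
  "totally_isotropic Q S \<longleftrightarrow> is_subspace S \<and> (\<forall>x\<in>S. Q x = 0)"

end

theory Submission
  imports Defs
begin

(* For pure x \<in> Q3 and q \<in> Q4 the element X = x \<otimes> q is fixed by \<gamma>3 \<otimes> \<gamma>4, and X^2 is the scalar
   c = Nrd(x) Nrd(q), since every quaternion satisfies x^2 = Trd(x) x - Nrd(x).  Hence y = \<phi>(X)
   satisfies y = u^-1 \<gamma>(y) u, i.e. \<gamma>(y) u = u y, and y^2 = c.  For w = \<gamma>(y) this gives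
   q_u(w) = Trd(\<gamma>(y) u y) = Trd(u y^2) = c Trd(u) = 0.  The only structural fact about D needed is
   associativity; D is the twisted group algebra of (Z/2)^4 whose cocycle is the product of the
   structure constants of Q1 and Q2.  The identity x^2 = Trd(x) x - Nrd(x) holds in every
   characteristic. *)

lemma bxor_cancel_left [simp]: "bxor \<alpha> (bxor \<alpha> \<beta>) = \<beta>"
  by (auto simp: bxor_def prod_eq_iff)

lemma bxor_eq_iff: "bxor \<alpha> \<beta> = \<gamma> \<longleftrightarrow> \<beta> = bxor \<alpha> \<gamma>"
  by (auto simp: bxor_def prod_eq_iff)

lemma qsign_assoc:
  "qsign a b \<alpha> \<beta> * qsign a b (bxor \<alpha> \<beta>) \<gamma> = qsign a b \<alpha> (bxor \<beta> \<gamma>) * qsign a b \<beta> \<gamma>"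
  by (cases \<alpha>; cases \<beta>; cases \<gamma>) (auto simp: qsign_def bxor_def)

lemma qmul_conv:
  "qmul a b x y = (\<lambda>\<gamma>. \<Sum>\<alpha>\<in>UNIV. qsign a b \<alpha> (bxor \<alpha> \<gamma>) * x \<alpha> * y (bxor \<alpha> \<gamma>))"
  by (simp add: qmul_def bxor_eq_iff if_distrib cong: if_cong)

definition qnrd :: "'a::field \<Rightarrow> 'a \<Rightarrow> 'a quat \<Rightarrow> 'a" where
  "qnrd a b x = x (False, False)^2 - a * x (True, False)^2 - b * x (False, True)^2
     + a * b * x (True, True)^2"

lemma UNIV_bool_pair:
  "(UNIV :: (bool \<times> bool) set) = {(False, False), (False, True), (True, False), (True, True)}"
  by (auto simp: UNIV_bool)

lemma qmul_self:
  "qmul a b x x = (\<lambda>\<gamma>. qtrd x * x \<gamma> - qnrd a b x * qbasis (False, False) \<gamma>)"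
proof
  fix \<gamma> :: "bool \<times> bool"
  show "qmul a b x x \<gamma> = qtrd x * x \<gamma> - qnrd a b x * qbasis (False, False) \<gamma>"
    by (cases \<gamma>) (auto simp: qmul_conv UNIV_bool_pair qsign_def bxor_def qtrd_def qnrd_def
        qbasis_def algebra_simps power2_eq_square)
qed

lemma qmul_pure_self:
  "qtrd x = 0 \<Longrightarrow> qmul a b x x = (\<lambda>\<gamma>. - qnrd a b x * qbasis (False, False) \<gamma>)"
  by (simp add: qmul_self)

definition qcanon_sign :: "bool \<times> bool \<Rightarrow> 'a::field" where
  "qcanon_sign \<alpha> = (if \<alpha> = (False, False) then 1 else -1)"

lemma qcanon_eq: "qcanon x = (\<lambda>\<alpha>. qcanon_sign \<alpha> * x \<alpha>)"
  by (auto simp: qcanon_def qtrd_def qbasis_def qcanon_sign_def)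

lemma qcanon_pure: "qtrd x = 0 \<Longrightarrow> qcanon x = (\<lambda>\<alpha>. - x \<alpha>)"
  by (simp add: qcanon_def)

(* The basis e_h1 \<otimes> f_h2 of Q1 \<otimes> Q2 is indexed by h \<in> (Z/2)^4, and
   (e_h1 \<otimes> f_h2)(e_k1 \<otimes> f_k2) = bsign h k (e \<otimes> f)_(bixor h k). *)
type_synonym bidx = "(bool \<times> bool) \<times> (bool \<times> bool)"

definition bixor :: "bidx \<Rightarrow> bidx \<Rightarrow> bidx" where
  "bixor h k = (bxor (fst h) (fst k), bxor (snd h) (snd k))"

definition bsign :: "'a::field \<Rightarrow> 'a \<Rightarrow> 'a \<Rightarrow> 'a \<Rightarrow> bidx \<Rightarrow> bidx \<Rightarrow> 'a" where
  "bsign a1 b1 a2 b2 h k = qsign a1 b1 (fst h) (fst k) * qsign a2 b2 (snd h) (snd k)"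

lemma bixor_cancel_left [simp]: "bixor h (bixor h k) = k"
  by (simp add: bixor_def)

lemma bixor_bixor_cancel [simp]: "bixor (bixor h k) (bixor k g) = bixor h g"
  by (auto simp: bixor_def bxor_def prod_eq_iff)

lemma bixor_left_commute: "bixor (bixor h k) g = bixor k (bixor h g)"
  by (auto simp: bixor_def bxor_def prod_eq_iff)

lemma bixor_zero_left [simp]: "bixor ((False, False), (False, False)) g = g"
  by (simp add: bixor_def bxor_def)

lemma bixor_self [simp]: "bixor g g = ((False, False), (False, False))"
  by (simp add: bixor_def bxor_def)

lemma bixor_eq_zero_iff: "bixor h g = ((False, False), (False, False)) \<longleftrightarrow> h = g"
  by (auto simp: bixor_def bxor_def prod_eq_iff)

lemma sum_bixor_reindex: "(\<Sum>k\<in>UNIV. f k) = (\<Sum>m\<in>UNIV. f (bixor h m))"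
  by (rule sum.reindex_bij_witness[where i = "bixor h" and j = "bixor h"]) auto

lemma bsign_assoc:
  "bsign a1 b1 a2 b2 h k * bsign a1 b1 a2 b2 (bixor h k) l =
   bsign a1 b1 a2 b2 h (bixor k l) * bsign a1 b1 a2 b2 k l"
proof -
  have "bsign a1 b1 a2 b2 h k * bsign a1 b1 a2 b2 (bixor h k) l =
    (qsign a1 b1 (fst h) (fst k) * qsign a1 b1 (bxor (fst h) (fst k)) (fst l)) *
    (qsign a2 b2 (snd h) (snd k) * qsign a2 b2 (bxor (snd h) (snd k)) (snd l))"
    by (simp add: bsign_def bixor_def ac_simps)
  also have "\<dots> = bsign a1 b1 a2 b2 h (bixor k l) * bsign a1 b1 a2 b2 k l"
    by (simp add: qsign_assoc bsign_def bixor_def ac_simps)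
  finally show ?thesis .
qed

lemma bsign_zero_left [simp]: "bsign a1 b1 a2 b2 ((False, False), (False, False)) k = 1"
  and bsign_zero_right [simp]: "bsign a1 b1 a2 b2 h ((False, False), (False, False)) = 1"
  by (simp_all add: bsign_def qsign_def)

lemma sum_pair_delta:
  fixes f :: "'a::finite \<Rightarrow> 'b::finite \<Rightarrow> 'c::comm_monoid_add"
  shows "(\<Sum>(\<alpha>, \<beta>)\<in>UNIV. if \<alpha> = a \<and> \<beta> = b then f \<alpha> \<beta> else 0) = f a b"
proof -
  have "(\<lambda>(\<alpha>, \<beta>). if \<alpha> = a \<and> \<beta> = b then f \<alpha> \<beta> else 0) = (\<lambda>k. if k = (a, b) then f a b else 0)"
    by auto
  then show ?thesis by (simp add: sum.delta)
qed

lemma bmul_conv: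
  "bmul a1 b1 a2 b2 X Y =
     (\<lambda>g. \<Sum>h\<in>UNIV. bsign a1 b1 a2 b2 h (bixor h g) * X h * Y (bixor h g))"
proof
  fix g :: bidx
  obtain \<gamma> \<delta> where g: "g = (\<gamma>, \<delta>)" by (cases g) blast
  have "bmul a1 b1 a2 b2 X Y g = (\<Sum>(\<alpha>, \<beta>)\<in>UNIV. \<Sum>(\<alpha>', \<beta>')\<in>UNIV.
      if \<alpha>' = bxor \<alpha> \<gamma> \<and> \<beta>' = bxor \<beta> \<delta>
      then qsign a1 b1 \<alpha> \<alpha>' * qsign a2 b2 \<beta> \<beta>' * X (\<alpha>, \<beta>) * Y (\<alpha>', \<beta>') else 0)"
    by (simp only: g bmul_def prod.case bxor_eq_iff)
  also have "\<dots> = (\<Sum>h\<in>UNIV. bsign a1 b1 a2 b2 h (bixor h g) * X h * Y (bixor h g))"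
    by (simp only: sum_pair_delta) (simp add: g bsign_def bixor_def case_prod_beta')
  finally show "bmul a1 b1 a2 b2 X Y g =
      (\<Sum>h\<in>UNIV. bsign a1 b1 a2 b2 h (bixor h g) * X h * Y (bixor h g))" .
qed

lemma bmul_assoc:
  "bmul a1 b1 a2 b2 (bmul a1 b1 a2 b2 X Y) Z = bmul a1 b1 a2 b2 X (bmul a1 b1 a2 b2 Y Z)"
proof
  fix g :: bidx
  let ?s = "bsign a1 b1 a2 b2"
  have cocycle: "?s h (bixor h k) * ?s k (bixor k g) = ?s h (bixor h g) * ?s (bixor h k) (bixor k g)"
    for h k
    using bsign_assoc[of a1 b1 a2 b2 h "bixor h k" "bixor k g"] by simp
  have reindex: "(\<Sum>k\<in>UNIV. ?s (bixor h k) (bixor k g) * Y (bixor h k) * Z (bixor k g)) =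
      (\<Sum>m\<in>UNIV. ?s m (bixor m (bixor h g)) * Y m * Z (bixor m (bixor h g)))" for h
    by (subst sum_bixor_reindex[where h = h]) (simp add: bixor_left_commute)
  have "bmul a1 b1 a2 b2 (bmul a1 b1 a2 b2 X Y) Z g = (\<Sum>h\<in>UNIV. \<Sum>k\<in>UNIV.
      (?s h (bixor h k) * ?s k (bixor k g)) * (X h * Y (bixor h k) * Z (bixor k g)))"
    by (subst sum.swap) (simp add: bmul_conv sum_distrib_left sum_distrib_right ac_simps)
  also have "\<dots> = (\<Sum>h\<in>UNIV. ?s h (bixor h g) * X h * (\<Sum>k\<in>UNIV.
      ?s (bixor h k) (bixor k g) * Y (bixor h k) * Z (bixor k g)))"
    by (simp add: cocycle sum_distrib_left ac_simps)
  also have "\<dots> = bmul a1 b1 a2 b2 X (bmul a1 b1 a2 b2 Y Z) g"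
    by (simp only: reindex) (simp add: bmul_conv)
  finally show "bmul a1 b1 a2 b2 (bmul a1 b1 a2 b2 X Y) Z g =
      bmul a1 b1 a2 b2 X (bmul a1 b1 a2 b2 Y Z) g" .
qed

lemma bone_eq: "bone = (\<lambda>h. if h = ((False, False), (False, False)) then 1 else 0)"
  by (auto simp: bone_def tensor_def qbasis_def)

lemma bmul_one_left [simp]: "bmul a1 b1 a2 b2 bone X = X"
  by (rule ext) (simp add: bmul_conv bone_eq if_distrib[where f = "\<lambda>t. _ * t"]
      if_distrib[where f = "\<lambda>t. t * _"] sum.delta cong: if_cong)

lemma bmul_one_right [simp]: "bmul a1 b1 a2 b2 X bone = X"
  by (rule ext) (simp add: bmul_conv bone_eq bixor_eq_zero_iff if_distrib[where f = "\<lambda>t. _ * t"]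
      sum.delta cong: if_cong)

lemma bmul_smult_right: "bmul a1 b1 a2 b2 X (\<lambda>z. c * Y z) = (\<lambda>z. c * bmul a1 b1 a2 b2 X Y z)"
  by (simp add: bmul_conv sum_distrib_left ac_simps)

lemma bmul_tensor:
  "bmul a1 b1 a2 b2 (tensor x y) (tensor x' y') = tensor (qmul a1 b1 x x') (qmul a2 b2 y y')"
proof
  fix g :: bidx
  obtain \<gamma> \<delta> where g: "g = (\<gamma>, \<delta>)" by (cases g) blast
  have "bmul a1 b1 a2 b2 (tensor x y) (tensor x' y') g =
    (\<Sum>(\<alpha>, \<beta>)\<in>UNIV \<times> UNIV. (qsign a1 b1 \<alpha> (bxor \<alpha> \<gamma>) * x \<alpha> * x' (bxor \<alpha> \<gamma>)) *
                           (qsign a2 b2 \<beta> (bxor \<beta> \<delta>) * y \<beta> * y' (bxor \<beta> \<delta>)))"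
    by (simp add: bmul_conv g bsign_def bixor_def tensor_def case_prod_beta' ac_simps)
  also have "\<dots> = qmul a1 b1 x x' \<gamma> * qmul a2 b2 y y' \<delta>"
    by (simp only: qmul_conv sum_product sum.cartesian_product)
  finally show "bmul a1 b1 a2 b2 (tensor x y) (tensor x' y') g =
      tensor (qmul a1 b1 x x') (qmul a2 b2 y y') g"
    by (simp add: tensor_def g)
qed

lemma tensor_scalars:
  "tensor (\<lambda>\<alpha>. c * qbasis (False, False) \<alpha>) (\<lambda>\<beta>. d * qbasis (False, False) \<beta>) =
     (\<lambda>h. (c * d) * bone h)"
  by (auto simp: tensor_def bone_def qbasis_def)

lemma tensor_pure_square:
  assumes "qtrd x = 0" and "qtrd y = 0"
  shows "bmul a1 b1 a2 b2 (tensor x y) (tensor x y) = (\<lambda>h. (qnrd a1 b1 x * qnrd a2 b2 y) * bone h)"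
  using assms tensor_scalars[of "- qnrd a1 b1 x" "- qnrd a2 b2 y"]
  by (simp add: bmul_tensor qmul_pure_self)

lemma tensor_map_qcanon:
  "tensor_map qcanon qcanon X = (\<lambda>(\<alpha>, \<beta>). qcanon_sign \<alpha> * qcanon_sign \<beta> * X (\<alpha>, \<beta>))"
proof -
  have "qcanon (qbasis \<alpha>') \<alpha> * qcanon (qbasis \<beta>') \<beta> * X (\<alpha>', \<beta>') =
    (if \<alpha>' = \<alpha> \<and> \<beta>' = \<beta> then qcanon_sign \<alpha> * qcanon_sign \<beta> * X (\<alpha>', \<beta>') else 0)"
    for \<alpha> \<beta> \<alpha>' \<beta>'
    by (auto simp: qcanon_eq qbasis_def)
  then show ?thesis
    by (simp add: tensor_map_def sum_pair_delta)
qed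

lemma tensor_map_qcanon_tensor: "tensor_map qcanon qcanon (tensor x y) = tensor (qcanon x) (qcanon y)"
  by (auto simp: tensor_map_qcanon qcanon_eq tensor_def)

lemma tensor_map_qcanon_pure_tensor:
  "qtrd x = 0 \<Longrightarrow> qtrd y = 0 \<Longrightarrow> tensor_map qcanon qcanon (tensor x y) = tensor x y"
  by (simp add: tensor_map_qcanon_tensor qcanon_pure) (simp add: tensor_def)

lemma tensor_map_qcanon_involutive:
  "tensor_map qcanon qcanon (tensor_map qcanon qcanon X) = (X :: 'a::field biquat)"
  by (auto simp: tensor_map_qcanon qcanon_sign_def)

lemma btrd_smult: "btrd (\<lambda>h. c * X h) = c * btrd X"
  by (simp add: btrd_def sum_distrib_left case_prod_beta' ac_simps)

definition coord_linear :: "(('b \<Rightarrow> 'a::field) \<Rightarrow> ('c \<Rightarrow> 'a)) \<Rightarrow> bool" where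
  "coord_linear f \<longleftrightarrow>
     (\<forall>X Y. f (\<lambda>z. X z + Y z) = (\<lambda>z. f X z + f Y z)) \<and>
     (\<forall>c X. f (\<lambda>z. c * X z) = (\<lambda>z. c * f X z))"

lemma coord_linear_tensor_left: "coord_linear (\<lambda>x. tensor x y)"
  by (simp add: coord_linear_def tensor_def fun_eq_iff algebra_simps)

lemma coord_linear_tensor_map: "coord_linear (tensor_map f g)"
  by (simp add: coord_linear_def tensor_map_def fun_eq_iff sum.distrib sum_distrib_left
      case_prod_beta' algebra_simps)

lemma is_subspace_image:
  assumes S: "is_subspace S" and "coord_linear f"
  shows "is_subspace (f ` S)"
proof -
  have add: "f (\<lambda>z. X z + Y z) = (\<lambda>z. f X z + f Y z)"
    and smult: "f (\<lambda>z. c * X z) = (\<lambda>z. c * f X z)" for X Y c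
    using \<open>coord_linear f\<close> by (simp_all add: coord_linear_def)
  have "f (\<lambda>_. 0) = (\<lambda>_. 0)"
    using smult[of 0] by simp
  then have "(\<lambda>_. 0) \<in> f ` S"
    using S by (force simp: is_subspace_def)
  moreover have "(\<lambda>z. f x z + f y z) \<in> f ` S" if "x \<in> S" "y \<in> S" for x y
    using S that by (simp add: is_subspace_def flip: add)
  moreover have "(\<lambda>z. c * f x z) \<in> f ` S" if "x \<in> S" for c x
    using S that by (simp add: is_subspace_def flip: smult)
  ultimately show ?thesis
    by (auto simp: is_subspace_def)
qed

lemma is_subspace_pure_quaternions: "is_subspace {x :: 'a::field quat. qtrd x = 0}"
proof -
  have "qtrd (\<lambda>z. x z + y z) = qtrd x + qtrd y" "qtrd (\<lambda>z. c * x z) = c * qtrd x"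
    "qtrd (\<lambda>_. 0 :: 'a) = 0" for x y :: "'a quat" and c
    by (simp_all add: qtrd_def algebra_simps)
  then show ?thesis
    by (simp add: is_subspace_def)
qed

lemma btrd_twisted_square_eq_0:
  fixes a1 b1 a2 b2 c :: "'a::field" and u v y :: "'a biquat"
  defines "mul \<equiv> bmul a1 b1 a2 b2" and "\<gamma> \<equiv> tensor_map qcanon qcanon"
  assumes "mul u v = bone"
    and y_sym: "y = mul (mul v (\<gamma> y)) u"
    and y_square: "mul y y = (\<lambda>h. c * bone h)"
    and "btrd u = 0"
  shows "btrd (mul (mul (\<gamma> y) u) (\<gamma> (\<gamma> y))) = 0"
proof -
  have "mul u y = mul (mul (mul u v) (\<gamma> y)) u"
    by (subst y_sym) (simp add: mul_def bmul_assoc)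
  then have commute: "mul (\<gamma> y) u = mul u y"
    using \<open>mul u v = bone\<close> by (simp add: mul_def)
  have "\<gamma> (\<gamma> y) = y"
    by (simp add: \<gamma>_def tensor_map_qcanon_involutive)
  then have "btrd (mul (mul (\<gamma> y) u) (\<gamma> (\<gamma> y))) = btrd (mul (mul u y) y)"
    by (simp only: commute)
  also have "\<dots> = btrd (mul u (mul y y))"
    by (simp add: mul_def bmul_assoc)
  also have "\<dots> = c * btrd u"
    by (simp only: y_square) (simp add: mul_def bmul_smult_right btrd_smult)
  finally show ?thesis
    using \<open>btrd u = 0\<close> by simp
qed

theorem claim4p5:
  fixes a1 b1 a2 b2 a3 b3 a4 b4 :: "'a::field"
    and u v :: "'a biquat"
    and \<phi> :: "'a biquat \<Rightarrow> 'a biquat"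
    and q :: "'a quat"
  assumes char: "(2::'a) \<noteq> 0"
    and nz: "a1 \<noteq> 0" "b1 \<noteq> 0" "a2 \<noteq> 0" "b2 \<noteq> 0"
            "a3 \<noteq> 0" "b3 \<noteq> 0" "a4 \<noteq> 0" "b4 \<noteq> 0"
    and u_inv: "bmul a1 b1 a2 b2 u v = bone" "bmul a1 b1 a2 b2 v u = bone"
    and u_sym: "tensor_map qcanon qcanon u = u"
    and u_trd: "btrd u = 0"
    and phi_bij: "bij \<phi>"
    and phi_add: "\<forall>X Y. \<phi> (\<lambda>z. X z + Y z) = (\<lambda>z. \<phi> X z + \<phi> Y z)"
    and phi_smult: "\<forall>c X. \<phi> (\<lambda>z. c * X z) = (\<lambda>z. c * \<phi> X z)"
    and phi_mult: "\<forall>X Y. \<phi> (bmul a3 b3 a4 b4 X Y) = bmul a1 b1 a2 b2 (\<phi> X) (\<phi> Y)"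
    and phi_one: "\<phi> bone = bone"
    and phi_inv: "\<forall>X. \<phi> (tensor_map qcanon qcanon X) =
                     bmul a1 b1 a2 b2 (bmul a1 b1 a2 b2 v (tensor_map qcanon qcanon (\<phi> X))) u"
    and q_pure: "qtrd q = 0"
  shows "totally_isotropic
           (\<lambda>x. btrd (bmul a1 b1 a2 b2 (bmul a1 b1 a2 b2 x u) (tensor_map qcanon qcanon x)))
           (tensor_map qcanon qcanon ` \<phi> ` {tensor x q | x. qtrd x = 0})"
proof -
  let ?\<gamma> = "tensor_map qcanon qcanon"
  have T: "{tensor x q | x. qtrd x = 0} = (\<lambda>x. tensor x q) ` {x. qtrd x = 0}"
    by blast
  have "coord_linear \<phi>"
    using phi_add phi_smult by (simp add: coord_linear_def)
  then have "is_subspace (?\<gamma> ` \<phi> ` {tensor x q | x. qtrd x = 0})"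
    unfolding T by (intro is_subspace_image is_subspace_pure_quaternions coord_linear_tensor_left
        coord_linear_tensor_map)
  moreover have "btrd (bmul a1 b1 a2 b2 (bmul a1 b1 a2 b2 (?\<gamma> (\<phi> X)) u) (?\<gamma> (?\<gamma> (\<phi> X)))) = 0"
    if X: "X = tensor x q" and "qtrd x = 0" for X x
  proof (rule btrd_twisted_square_eq_0[OF u_inv(1) _ _ u_trd])
    have "?\<gamma> X = X"
      using X \<open>qtrd x = 0\<close> q_pure by (simp add: tensor_map_qcanon_pure_tensor)
    then show "\<phi> X = bmul a1 b1 a2 b2 (bmul a1 b1 a2 b2 v (?\<gamma> (\<phi> X))) u"
      using phi_inv by metis
    have "bmul a1 b1 a2 b2 (\<phi> X) (\<phi> X) = \<phi> (bmul a3 b3 a4 b4 X X)"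
      using phi_mult by simp
    also have "\<dots> = (\<lambda>h. (qnrd a3 b3 x * qnrd a4 b4 q) * bone h)"
      using X \<open>qtrd x = 0\<close> q_pure phi_smult phi_one by (simp add: tensor_pure_square)
    finally show "bmul a1 b1 a2 b2 (\<phi> X) (\<phi> X) = (\<lambda>h. (qnrd a3 b3 x * qnrd a4 b4 q) * bone h)" .
  qed
  ultimately show ?thesis
    by (auto simp: totally_isotropic_def)
qed

end
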